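(* Let $n\ge 4$ and for $j=1,\ldots,n-1$ let $\xi_j\in\mathbb R^{n-1}$ be the vector whose $i$-th entry ($i=1,\ldots,n-1$) is $\cos\frac{(i-1)(2j-1)\pi}{2(n-1)}$; let $e$ be the all-ones vector of length $n-1$. If $n\not\equiv 0\pmod 4$, then $\prod_{j=1}^{n-1}e^{T}\xi_j=\pm 2^{1-\lceil n/2\rceil}\neq 0$. If $n\equiv 0\pmod 4$, then $e^{T}\xi_{n/2}=0$ and $e^{T}\xi_j\neq 0$ for every $j\in\{1,\ldots,n-1\}\setminus\{n/2\}$. *)

theory Defs
  imports Complex_Main
begin

definition xi_entry :: "nat \<Rightarrow> nat \<Rightarrow> nat \<Rightarrow> real" where
  "xi_entry n j i = cos ((real i - 1) * (2 * real j - 1) * pi / (2 * (real n - 1)))"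

definition eT_xi :: "nat \<Rightarrow> nat \<Rightarrow> real" where
  "eT_xi n j = (\<Sum>i = 1..n - 1. xi_entry n j i)"

end

theory Submission
  imports Defs
begin

(* Write phi_j = (2j - 1) pi / (4(n - 1)). Summing the cosines cos (2 k phi_j) by telescoping gives
   e^T xi_j = (sin phi_j + (-1)^(j+1) cos phi_j) / (2 sin phi_j), with phi_j in (0, pi/2); so
   e^T xi_j = 0 only if j is even and phi_j = pi/4, i.e. n = 2j with 4 dividing n.
   Since phi_(n-j) = pi/2 - phi_j, the factors j and n - j combine to +-cot (2 phi_j) / 2 for odd n,
   and these cotangents cancel in pairs. For n = 2N + 2 with N even the middle factor is 1 and the
   pairs combine to +-(1 + (-1)^k cos (k pi/(2N+1))) / (2 cos (k pi/(2N+1))) with k = N + 1 - j;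
   the half-angle formula together with prod_(k=1..N) cos (k pi/(2N+1)) = 2^(-N) evaluates the
   product. *)

lemma sin_mult_sum_cos_double:
  "2 * sin x * (\<Sum>k<N. cos (2 * real k * x)) = sin ((2 * real N - 1) * x) + sin x"
proof (induction N)
  case 0
  then show ?case by simp
next
  case (Suc N)
  have "2 * sin x * cos (2 * real N * x) = sin ((2 * real N + 1) * x) - sin ((2 * real N - 1) * x)"
    using sin_add[of "2 * real N * x" x] sin_diff[of "2 * real N * x" x]
    by (simp add: algebra_simps)
  with Suc show ?case
    by (simp add: algebra_simps)
qed

lemma mult_pi_first_quadrant:
  fixes r :: real
  assumes "0 < r" "r < 1 / 2"
  shows "0 < r * pi" "r * pi < pi / 2" "0 < sin (r * pi)" "0 < cos (r * pi)"
proof -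
  show "0 < r * pi"
    using assms(1) by simp
  moreover have "r * pi < 1 / 2 * pi"
    using assms(2) by (rule mult_strict_right_mono) simp
  ultimately show "r * pi < pi / 2" "0 < sin (r * pi)" "0 < cos (r * pi)"
    by (auto intro: sin_gt_zero cos_gt_zero)
qed

(* The i-th entry of xi_j is cos (2 (i - 1) * xi_angle n j). *)
definition xi_angle :: "nat \<Rightarrow> nat \<Rightarrow> real" where
  "xi_angle n j = (2 * real j - 1) * pi / (4 * (real n - 1))"

lemma xi_angle_first_quadrant:
  assumes "1 \<le> j" "j \<le> n - 1"
  shows "0 < xi_angle n j" "xi_angle n j < pi / 2" "0 < sin (xi_angle n j)" "0 < cos (xi_angle n j)"
proof -
  have "0 < (2 * real j - 1) / (4 * (real n - 1))" "(2 * real j - 1) / (4 * (real n - 1)) < 1 / 2"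
    using assms by (auto simp: field_simps)
  from mult_pi_first_quadrant[OF this]
  show "0 < xi_angle n j" "xi_angle n j < pi / 2" "0 < sin (xi_angle n j)" "0 < cos (xi_angle n j)"
    unfolding xi_angle_def by simp_all
qed

lemma xi_angle_reflect:
  assumes "j \<le> n" "2 \<le> n"
  shows "xi_angle n (n - j) = pi / 2 - xi_angle n j"
  using assms unfolding xi_angle_def by (simp add: of_nat_diff field_simps)

lemma eT_xi_eq:
  assumes "1 \<le> j" "j \<le> n - 1"
  shows "eT_xi n j =
    (sin (xi_angle n j) + (-1) ^ (j + 1) * cos (xi_angle n j)) / (2 * sin (xi_angle n j))"
proof -
  define \<phi> where "\<phi> = xi_angle n j"
  define m where "m = n - 1"
  obtain i where j: "j = Suc i"
    using assms(1) by (cases j) auto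
  have m: "real n - 1 = real m" "0 < real m"
    using assms unfolding m_def by auto
  have "eT_xi n j = (\<Sum>k<m. xi_entry n j (Suc k))"
    unfolding eT_xi_def m_def by (simp add: sum.atLeast1_atMost_eq)
  also have "\<dots> = (\<Sum>k<m. cos (2 * real k * \<phi>))"
    unfolding xi_entry_def \<phi>_def xi_angle_def m
    by (intro sum.cong refl arg_cong[where f = cos]) (simp add: field_simps)
  finally have telescoped: "2 * sin \<phi> * eT_xi n j = sin ((2 * real m - 1) * \<phi>) + sin \<phi>"
    using sin_mult_sum_cos_double by simp
  have "(2 * real m - 1) * \<phi> = real (Suc (2 * i)) * pi / 2 - \<phi>"
    using m(2) unfolding \<phi>_def xi_angle_def m j by (simp add: field_simps)
  moreover have "sin (real (Suc (2 * i)) * pi / 2) = (-1) ^ (j + 1)"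
    using sin_cos_npi[of i] j by simp
  moreover have "cos (real (Suc (2 * i)) * pi / 2) = 0"
    using cos_pi_eq_zero[of i] by (metis mult.commute)
  ultimately have "sin ((2 * real m - 1) * \<phi>) = (-1) ^ (j + 1) * cos \<phi>"
    by (simp only: sin_diff)
  with telescoped xi_angle_first_quadrant(3)[OF assms] show ?thesis
    unfolding \<phi>_def[symmetric] by (simp add: field_simps)
qed

lemma eT_xi_mult_reflect:
  assumes "1 \<le> j" "j \<le> n - 1"
  defines "\<theta> \<equiv> 2 * xi_angle n j"
  shows "even n \<Longrightarrow> eT_xi n j * eT_xi n (n - j) = (sin \<theta> + (-1) ^ (j + 1)) / (2 * sin \<theta>)"
    and "odd n \<Longrightarrow> eT_xi n j * eT_xi n (n - j) = (-1) ^ (j + 1) * cos \<theta> / (2 * sin \<theta>)"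
proof -
  define \<phi> where "\<phi> = xi_angle n j"
  define \<sigma> where "\<sigma> = (-1 :: real) ^ (j + 1)"
  have "j \<le> n"
    using assms(2) by simp
  then have "(-1 :: real) ^ (n - j + 1) = (-1) ^ (n + j + 1)"
    by (simp add: neg_one_power_add_eq_neg_one_power_diff)
  then have sign: "(-1 :: real) ^ (n - j + 1) = (-1) ^ n * \<sigma>"
    unfolding \<sigma>_def by (simp add: power_add)
  have "eT_xi n (n - j) = (cos \<phi> + (-1) ^ (n - j + 1) * sin \<phi>) / (2 * cos \<phi>)"
    using eT_xi_eq[of "n - j" n] xi_angle_reflect[of j n] assms
    unfolding \<phi>_def by (simp add: sin_diff cos_diff)
  moreover have "eT_xi n j = (sin \<phi> + \<sigma> * cos \<phi>) / (2 * sin \<phi>)"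
    using eT_xi_eq[OF assms(1,2)] unfolding \<phi>_def \<sigma>_def .
  ultimately have product: "eT_xi n j * eT_xi n (n - j) =
      (sin \<phi> + \<sigma> * cos \<phi>) * (cos \<phi> + (-1) ^ n * \<sigma> * sin \<phi>) / (2 * sin \<theta>)"
    unfolding sign \<theta>_def \<phi>_def[symmetric] sin_double by (simp add: mult_ac)
  have \<sigma>2: "\<sigma> * \<sigma> = 1"
    unfolding \<sigma>_def by (simp add: power_add[symmetric])
  have pythagoras: "sin \<phi> * sin \<phi> + cos \<phi> * cos \<phi> = 1"
    using sin_cos_squared_add[of \<phi>] by (simp add: power2_eq_square)
  show "even n \<Longrightarrow> eT_xi n j * eT_xi n (n - j) = (sin \<theta> + (-1) ^ (j + 1)) / (2 * sin \<theta>)"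
  proof -
    assume "even n"
    have "(sin \<phi> + \<sigma> * cos \<phi>) * (cos \<phi> + \<sigma> * sin \<phi>)
        = 2 * sin \<phi> * cos \<phi> + \<sigma> * (sin \<phi> * sin \<phi> + cos \<phi> * cos \<phi>)"
      using \<sigma>2 by algebra
    with \<open>even n\<close> show ?thesis
      unfolding product pythagoras \<theta>_def \<phi>_def[symmetric] \<sigma>_def[symmetric] sin_double by simp
  qed
  show "odd n \<Longrightarrow> eT_xi n j * eT_xi n (n - j) = (-1) ^ (j + 1) * cos \<theta> / (2 * sin \<theta>)"
  proof -
    assume "odd n"
    have "(sin \<phi> + \<sigma> * cos \<phi>) * (cos \<phi> - \<sigma> * sin \<phi>)
        = \<sigma> * (cos \<phi> ^ 2 - sin \<phi> ^ 2)"
      using \<sigma>2 by algebra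
    with \<open>odd n\<close> show ?thesis
      unfolding product \<theta>_def \<phi>_def[symmetric] \<sigma>_def[symmetric] cos_double by simp
  qed
qed

lemma eT_xi_eq_0_iff:
  assumes "1 \<le> j" "j \<le> n - 1"
  shows "eT_xi n j = 0 \<longleftrightarrow> n = 2 * j \<and> even j"
proof -
  define \<phi> where "\<phi> = xi_angle n j"
  have bounds: "0 < \<phi>" "\<phi> < pi / 2" and pos: "0 < sin \<phi>" "0 < cos \<phi>"
    using xi_angle_first_quadrant[OF assms] unfolding \<phi>_def by auto
  have "eT_xi n j = 0 \<longleftrightarrow> sin \<phi> + (-1) ^ (j + 1) * cos \<phi> = 0"
    using eT_xi_eq[OF assms] pos unfolding \<phi>_def by simp
  also have "\<dots> \<longleftrightarrow> even j \<and> sin \<phi> = cos \<phi>"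
  proof (cases "even j")
    case False
    with pos show ?thesis
      by simp
  qed simp
  finally have zero_iff: "eT_xi n j = 0 \<longleftrightarrow> even j \<and> sin \<phi> = cos \<phi>" .
  have sin_cos_iff: "sin \<phi> = cos \<phi> \<longleftrightarrow> \<phi> = pi / 4"
  proof
    assume "sin \<phi> = cos \<phi>"
    have "cos (pi / 2 - \<phi>) = sin \<phi>"
      by (simp add: cos_diff)
    also note \<open>sin \<phi> = cos \<phi>\<close>
    finally have "cos (pi / 2 - \<phi>) = cos \<phi>" .
    then have "pi / 2 - \<phi> = \<phi>"
      using bounds by (intro cos_inj_pi[of "pi / 2 - \<phi>" \<phi>]) simp_all
    then show "\<phi> = pi / 4"
      by linarith
  next
    assume "\<phi> = pi / 4"
    then show "sin \<phi> = cos \<phi>"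
      by (simp only: sin_45 cos_45)
  qed
  have "\<phi> = pi / 4 \<longleftrightarrow> n = 2 * j"
    using assms unfolding \<phi>_def xi_angle_def by (auto simp: field_simps)
  with zero_iff sin_cos_iff show ?thesis
    by blast
qed

lemma prod_atLeastAtMost_pairs:
  fixes f :: "nat \<Rightarrow> 'a :: comm_monoid_mult"
  shows "(\<Prod>j = 1..2 * s. f j) = (\<Prod>j = 1..s. f j * f (2 * s + 1 - j))"
proof -
  have "{1..2 * s} = {1..s} \<union> {s + 1..2 * s}"
    by auto
  then have "(\<Prod>j = 1..2 * s. f j) = (\<Prod>j = 1..s. f j) * (\<Prod>j = s + 1..2 * s. f j)"
    by (simp add: prod.union_disjoint)
  also have "(\<Prod>j = s + 1..2 * s. f j) = (\<Prod>j = 1..s. f (2 * s + 1 - j))"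
    by (rule prod.reindex_bij_witness[where i = "\<lambda>j. 2 * s + 1 - j" and j = "\<lambda>j. 2 * s + 1 - j"]) auto
  finally show ?thesis
    by (simp add: prod.distrib)
qed

lemma prod_atLeastAtMost_pairs_middle:
  fixes f :: "nat \<Rightarrow> 'a :: comm_monoid_mult"
  shows "(\<Prod>j = 1..2 * s + 1. f j) = (\<Prod>j = 1..s. f j * f (2 * s + 2 - j)) * f (s + 1)"
proof -
  have "{1..2 * s + 1} = insert (s + 1) ({1..s} \<union> {s + 2..2 * s + 1})"
    by auto
  then have "(\<Prod>j = 1..2 * s + 1. f j) = (\<Prod>j = 1..s. f j) * (\<Prod>j = s + 2..2 * s + 1. f j) * f (s + 1)"
    by (simp add: prod.union_disjoint mult_ac)
  also have "(\<Prod>j = s + 2..2 * s + 1. f j) = (\<Prod>j = 1..s. f (2 * s + 2 - j))"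
    by (rule prod.reindex_bij_witness[where i = "\<lambda>j. 2 * s + 2 - j" and j = "\<lambda>j. 2 * s + 2 - j"]) auto
  finally show ?thesis
    by (simp add: prod.distrib)
qed

lemma abs_prod_eT_xi_odd:
  assumes n: "n = 2 * s + 1"
  shows "\<bar>\<Prod>j = 1..n - 1. eT_xi n j\<bar> = 1 / 2 ^ s"
proof -
  define \<theta> where "\<theta> j = 2 * xi_angle n j" for j
  have \<theta>: "\<theta> j = (2 * real j - 1) / (4 * real s) * pi" for j
    unfolding \<theta>_def xi_angle_def n by simp
  have sin_cos_pos: "0 < sin (\<theta> j)" "0 < cos (\<theta> j)" if "j \<in> {1..s}" for j
  proof -
    have "0 < (2 * real j - 1) / (4 * real s)" "(2 * real j - 1) / (4 * real s) < 1 / 2"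
      using that by (auto simp: field_simps)
    from mult_pi_first_quadrant(3,4)[OF this] show "0 < sin (\<theta> j)" "0 < cos (\<theta> j)"
      unfolding \<theta> .
  qed
  have \<theta>_reflect: "\<theta> (s + 1 - j) = pi / 2 - \<theta> j" if "j \<in> {1..s}" for j
    using that unfolding \<theta> by (simp add: of_nat_diff field_simps)
  have pair: "\<bar>eT_xi n j * eT_xi n (n - j)\<bar> = cos (\<theta> j) / (2 * sin (\<theta> j))"
    if "j \<in> {1..s}" for j
    using eT_xi_mult_reflect(2)[of j n] sin_cos_pos[OF that] that n
    unfolding \<theta>_def[symmetric] by (simp add: abs_mult abs_divide)
  have "(\<Prod>j = 1..n - 1. eT_xi n j) = (\<Prod>j = 1..s. eT_xi n j * eT_xi n (n - j))"
    using prod_atLeastAtMost_pairs[of "eT_xi n" s] n by simp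
  then have "\<bar>\<Prod>j = 1..n - 1. eT_xi n j\<bar> = (\<Prod>j = 1..s. \<bar>eT_xi n j * eT_xi n (n - j)\<bar>)"
    by (simp add: abs_prod)
  also have "\<dots> = (\<Prod>j = 1..s. cos (\<theta> j)) / (2 ^ s * (\<Prod>j = 1..s. sin (\<theta> j)))"
    by (simp add: pair prod_dividef prod.distrib)
  also have "(\<Prod>j = 1..s. cos (\<theta> j)) = (\<Prod>j = 1..s. cos (\<theta> (s + 1 - j)))"
    by (rule prod.atLeastAtMost_rev)
  also have "\<dots> = (\<Prod>j = 1..s. sin (\<theta> j))"
  proof (rule prod.cong[OF refl])
    fix j
    assume "j \<in> {1..s}"
    then show "cos (\<theta> (s + 1 - j)) = sin (\<theta> j)"
      unfolding \<theta>_reflect[OF \<open>j \<in> {1..s}\<close>] by (simp add: cos_diff)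
  qed
  also have "0 < (\<Prod>j = 1..s. sin (\<theta> j))"
    using sin_cos_pos(1) by (rule prod_pos)
  then have "(\<Prod>j = 1..s. sin (\<theta> j)) / (2 ^ s * (\<Prod>j = 1..s. sin (\<theta> j))) = 1 / 2 ^ s"
    by (simp del: prod_zero_iff)
  finally show ?thesis .
qed

(* 2 * halve_reflect N l is l or 2N + 1 - l, so on the angles k pi/(2N+1), k = 1..N, the
   permutation halve_reflect N inverts the doubling map up to the reflection x -> pi - x. *)
definition halve_reflect :: "nat \<Rightarrow> nat \<Rightarrow> nat" where
  "halve_reflect N l = (if even l then l div 2 else (2 * N + 1 - l) div 2)"

lemma double_halve_reflect:
  assumes "l \<le> 2 * N + 1"
  shows "2 * halve_reflect N l = (if even l then l else 2 * N + 1 - l)"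
  using assms unfolding halve_reflect_def by auto

lemma bij_betw_halve_reflect: "bij_betw (halve_reflect N) {1..N} {1..N}"
proof -
  have "halve_reflect N ` {1..N} \<subseteq> {1..N}"
    unfolding halve_reflect_def by (auto; presburger)
  moreover have "inj_on (halve_reflect N) {1..N}"
  proof (rule inj_onI)
    fix a b
    assume a: "a \<in> {1..N}" and b: "b \<in> {1..N}" and eq: "halve_reflect N a = halve_reflect N b"
    have "(if even a then a else 2 * N + 1 - a) = (if even b then b else 2 * N + 1 - b)"
      using double_halve_reflect[of a N] double_halve_reflect[of b N] a b eq by simp
    then show "a = b"
      using a b by (simp split: if_splits)
  qed
  ultimately show ?thesis
    unfolding bij_betw_def by (simp add: endo_inj_surj)
qed

lemma double_angle_halve_reflect:
  assumes "l \<le> 2 * N + 1"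
  shows "2 * (real (halve_reflect N l) * pi / real (2 * N + 1)) =
    (if even l then real l * pi / real (2 * N + 1) else pi - real l * pi / real (2 * N + 1))"
proof -
  define M where "M = real (2 * N + 1)"
  have M_pos: "0 < M"
    unfolding M_def by simp
  have "real (2 * halve_reflect N l) = real (if even l then l else 2 * N + 1 - l)"
    using double_halve_reflect[OF assms] by (rule arg_cong)
  then have double: "2 * real (halve_reflect N l) = (if even l then real l else M - real l)"
    using assms unfolding M_def by (cases "even l") (simp_all add: of_nat_diff)
  have "2 * (real (halve_reflect N l) * pi / M) = (2 * real (halve_reflect N l)) * pi / M"
    by simp
  also have "\<dots> = (if even l then real l else M - real l) * pi / M"
    by (simp only: double)
  also have "\<dots> = (if even l then real l * pi / M else pi - real l * pi / M)"
    using M_pos by (simp add: field_simps)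
  finally show ?thesis
    unfolding M_def .
qed

lemma prod_cos_pi_div_odd: "(\<Prod>k = 1..N. cos (real k * pi / real (2 * N + 1))) = 1 / 2 ^ N"
proof -
  define a where "a k = real k * pi / real (2 * N + 1)" for k
  have "0 < sin (a k)" if "k \<in> {1..N}" for k
  proof -
    have "0 < real k / real (2 * N + 1)" "real k / real (2 * N + 1) < 1 / 2"
      using that by (auto simp: field_simps)
    from mult_pi_first_quadrant(3)[OF this] show ?thesis
      unfolding a_def by simp
  qed
  then have sin_pos: "0 < (\<Prod>k = 1..N. sin (a k))"
    by (rule prod_pos)
  have double: "2 * a (halve_reflect N l) = (if even l then a l else pi - a l)" if "l \<in> {1..N}" for l
    unfolding a_def using that by (intro double_angle_halve_reflect) simp
  have "(\<Prod>k = 1..N. sin (a k)) = (\<Prod>l = 1..N. sin (2 * a (halve_reflect N l)))"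
    by (intro prod.cong refl) (simp add: double)
  also have "\<dots> = (\<Prod>k = 1..N. sin (2 * a k))"
    using bij_betw_halve_reflect by (rule prod.reindex_bij_betw)
  also have "\<dots> = 2 ^ N * (\<Prod>k = 1..N. sin (a k)) * (\<Prod>k = 1..N. cos (a k))"
    by (simp add: sin_double prod.distrib)
  finally have "(\<Prod>k = 1..N. sin (a k)) * (2 ^ N * (\<Prod>k = 1..N. cos (a k)) - 1) = 0"
    by (simp add: algebra_simps)
  with sin_pos have "2 ^ N * (\<Prod>k = 1..N. cos (a k)) - 1 = 0"
    by (metis mult_eq_0_iff order_less_irrefl)
  then show ?thesis
    unfolding a_def by (simp add: field_simps)
qed

lemma prod_one_add_alternating_cos_pi_div_odd:
  "(\<Prod>k = 1..N. 1 + (-1) ^ k * cos (real k * pi / real (2 * N + 1))) = 1 / 2 ^ N"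
proof -
  define a where "a k = real k * pi / real (2 * N + 1)" for k
  have "(\<Prod>k = 1..N. 1 + (-1) ^ k * cos (a k)) = (\<Prod>l = 1..N. 2 * cos (a (halve_reflect N l)) ^ 2)"
  proof (intro prod.cong refl)
    fix l
    assume "l \<in> {1..N}"
    then have "2 * a (halve_reflect N l) = (if even l then a l else pi - a l)"
      unfolding a_def by (intro double_angle_halve_reflect) simp
    then have "1 + (-1) ^ l * cos (a l) = 1 + cos (2 * a (halve_reflect N l))"
      by (simp add: cos_diff)
    then show "1 + (-1) ^ l * cos (a l) = 2 * cos (a (halve_reflect N l)) ^ 2"
      by (simp add: cos_double_cos)
  qed
  also have "\<dots> = (\<Prod>k = 1..N. 2 * cos (a k) ^ 2)"
    using bij_betw_halve_reflect by (rule prod.reindex_bij_betw)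
  also have "\<dots> = 2 ^ N * (\<Prod>k = 1..N. cos (a k)) ^ 2"
    by (simp add: prod.distrib prod_power_distrib)
  also have "\<dots> = 1 / 2 ^ N"
    unfolding a_def prod_cos_pi_div_odd by (simp add: power2_eq_square)
  finally show ?thesis
    unfolding a_def .
qed

lemma abs_prod_eT_xi_even:
  assumes n: "n = 2 * N + 2" and "even N"
  shows "\<bar>\<Prod>j = 1..n - 1. eT_xi n j\<bar> = 1 / 2 ^ N"
proof -
  define c where "c k = cos (real k * pi / real (2 * N + 1))" for k
  define f where "f k = (1 + (-1) ^ k * c k) / (2 * c k)" for k
  have c_bounds: "0 < c k" "c k \<le> 1" if "k \<in> {1..N}" for k
  proof -
    have "0 < real k / real (2 * N + 1)" "real k / real (2 * N + 1) < 1 / 2"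
      using that by (auto simp: field_simps)
    from mult_pi_first_quadrant(4)[OF this] show "0 < c k"
      unfolding c_def by simp
    show "c k \<le> 1"
      unfolding c_def by simp
  qed
  have middle: "eT_xi n (N + 1) = 1"
  proof -
    have angle: "xi_angle n (N + 1) = pi / 4"
      unfolding xi_angle_def n by (simp add: field_simps)
    have "1 \<le> N + 1" "N + 1 \<le> n - 1"
      using n by simp_all
    from eT_xi_eq[OF this, unfolded angle] \<open>even N\<close> show ?thesis
      by (simp add: sin_45 cos_45)
  qed
  have pair: "\<bar>eT_xi n j * eT_xi n (n - j)\<bar> = f (N + 1 - j)" if j: "j \<in> {1..N}" for j
  proof -
    define k where "k = N + 1 - j"
    have k: "k \<in> {1..N}"
      using j unfolding k_def by auto
    have "2 * xi_angle n j = pi / 2 - real k * pi / real (2 * N + 1)"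
      using j unfolding xi_angle_def n k_def by (simp add: of_nat_diff field_simps)
    then have sin_eq: "sin (2 * xi_angle n j) = c k"
      unfolding c_def by (simp add: sin_diff)
    have "(-1 :: real) ^ (j + 1) = (-1) ^ (N + 1 + j)"
      using \<open>even N\<close> by (simp add: power_add)
    also have "\<dots> = (-1) ^ k"
      unfolding k_def using j by (intro neg_one_power_add_eq_neg_one_power_diff) simp
    finally have sign: "(-1 :: real) ^ (j + 1) = (-1) ^ k" .
    have "eT_xi n j * eT_xi n (n - j) = (c k + (-1) ^ k) / (2 * c k)"
      using eT_xi_mult_reflect(1)[of j n] j n unfolding sin_eq sign by simp
    then show ?thesis
      using c_bounds[OF k] unfolding k_def[symmetric] f_def
      by (cases "even k") (simp_all add: abs_divide)
  qed
  have "(\<Prod>j = 1..n - 1. eT_xi n j) = (\<Prod>j = 1..N. eT_xi n j * eT_xi n (n - j)) * eT_xi n (N + 1)"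
    using prod_atLeastAtMost_pairs_middle[of "eT_xi n" N] n by simp
  then have "\<bar>\<Prod>j = 1..n - 1. eT_xi n j\<bar> = (\<Prod>j = 1..N. \<bar>eT_xi n j * eT_xi n (n - j)\<bar>)"
    unfolding middle by (simp only: abs_mult abs_prod abs_one mult_1_right)
  also have "\<dots> = (\<Prod>j = 1..N. f (N + 1 - j))"
    by (rule prod.cong[OF refl pair])
  also have "\<dots> = (\<Prod>k = 1..N. f k)"
    by (rule prod.atLeastAtMost_rev[symmetric])
  also have "\<dots> = (\<Prod>k = 1..N. 1 + (-1) ^ k * c k) / (2 ^ N * (\<Prod>k = 1..N. c k))"
    unfolding f_def by (simp add: prod_dividef prod.distrib)
  also have "\<dots> = 1 / 2 ^ N"
    unfolding c_def prod_one_add_alternating_cos_pi_div_odd prod_cos_pi_div_odd by simp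
  finally show ?thesis .
qed

lemma abs_prod_eT_xi:
  assumes "n mod 4 \<noteq> 0"
  shows "\<bar>\<Prod>j = 1..n - 1. eT_xi n j\<bar> = 1 / 2 ^ ((n - 1) div 2)"
proof (cases "even n")
  case True
  with assms have "n = 2 * (2 * (n div 4)) + 2"
    by presburger
  then show ?thesis
    using abs_prod_eT_xi_even[of n "2 * (n div 4)"] by simp
next
  case False
  then obtain s where "n = 2 * s + 1"
    by (rule oddE)
  then show ?thesis
    using abs_prod_eT_xi_odd by simp
qed

lemma two_powr_one_minus_ceiling_half:
  assumes "1 \<le> n"
  shows "2 powr (1 - real_of_int \<lceil>real n / 2\<rceil>) = 1 / 2 ^ ((n - 1) div 2)"
proof -
  define d where "d = (n - 1) div 2"
  have "2 * d < n" "n \<le> 2 * d + 2"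
    using assms unfolding d_def by linarith+
  then have "real (2 * d) < real n" "real n \<le> real (2 * d + 2)"
    by (simp_all only: of_nat_less_iff of_nat_le_iff)
  then have "\<lceil>real n / 2\<rceil> = int d + 1"
    by (intro ceiling_unique) simp_all
  then show ?thesis
    unfolding d_def[symmetric] by (simp add: powr_minus_divide powr_realpow)
qed

theorem lemma4p3:
  fixes n :: nat
  assumes "n \<ge> 4"
  shows "(n mod 4 \<noteq> 0 \<longrightarrow>
            ((\<Prod>j = 1..n - 1. eT_xi n j) = 2 powr (1 - real_of_int \<lceil>real n / 2\<rceil>)
             \<or> (\<Prod>j = 1..n - 1. eT_xi n j) = - (2 powr (1 - real_of_int \<lceil>real n / 2\<rceil>)))
            \<and> (\<Prod>j = 1..n - 1. eT_xi n j) \<noteq> 0)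
       \<and> (n mod 4 = 0 \<longrightarrow>
            eT_xi n (n div 2) = 0 \<and> (\<forall>j \<in> {1..n - 1} - {n div 2}. eT_xi n j \<noteq> 0))"
proof -
  let ?P = "\<Prod>j = 1..n - 1. eT_xi n j"
  let ?v = "2 powr (1 - real_of_int \<lceil>real n / 2\<rceil>)"
  have "(?P = ?v \<or> ?P = - ?v) \<and> ?P \<noteq> 0" if "n mod 4 \<noteq> 0"
  proof -
    have "\<bar>?P\<bar> = ?v"
      using abs_prod_eT_xi[OF that] two_powr_one_minus_ceiling_half[of n] assms by simp
    moreover have "0 < ?v"
      by simp
    ultimately show ?thesis
      by (auto simp del: prod_zero_iff)
  qed
  moreover have "eT_xi n (n div 2) = 0 \<and> (\<forall>j \<in> {1..n - 1} - {n div 2}. eT_xi n j \<noteq> 0)"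
    if "n mod 4 = 0"
  proof -
    have "n = 2 * (n div 2)" "even (n div 2)" "1 \<le> n div 2" "n div 2 \<le> n - 1"
      using that assms by presburger+
    then show ?thesis
      using eT_xi_eq_0_iff[of _ n] by auto
  qed
  ultimately show ?thesis
    by blast
qed

end
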